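(* Let $q\ge 2$ and let $n,k$ be positive integers with $5\le k\le n$. Then $$q^n\Big(\frac{q-1}{q}\Big)^{c_2\frac{n}{q^{k-1}}}\,e^{-\frac{c_2}{c_1}\frac{n}{q^{1.5k-1}}}\;\le\; a_q(n,k)\;\le\; q^{\,n- c_3\frac{n-2k}{q^k}},$$ where $c_1=\frac{(q-1)q^{\lceil k/2\rceil-k/2}}{2q}$, $c_2=\frac{\lfloor n/q^{k-1}\rfloor+1}{n/q^{k-1}}$ and $c_3=\frac{(\log_q e)(q-1)^2}{2q^{2}}$.
   Context: $\Sigma_q=\{0,1,\dots,q-1\}$. A vector $\vec a=(a_1,\dots,a_n)\in\Sigma_q^n$ is a $k$-RLL vector if $n<k$ or every window $(a_i,\dots,a_{i+k-1})$, $i\in[1,n-k+1]$, contains a nonzero symbol (i.e. $\vec a$ has no run of $k$ consecutive zeros). $A_q(n,k)$ is the set of $k$-RLL vectors in $\Sigma_q^n$ and $a_q(n,k)=|A_q(n,k)|$. *)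

theory Defs
  imports Complex_Main
begin

text \<open>Vectors in Sigma_q^n are lists of length n with entries in {0..<q}.
  Positions are 0-based: window starting at i covers indices i..i+k-1.\<close>

definition is_RLL :: "nat \<Rightarrow> nat list \<Rightarrow> bool" where
  "is_RLL k a \<longleftrightarrow> length a < k \<or>
     (\<forall>i. i + k \<le> length a \<longrightarrow> (\<exists>j\<in>{i..<i+k}. a ! j \<noteq> 0))"

definition A_set :: "nat \<Rightarrow> nat \<Rightarrow> nat \<Rightarrow> nat list set" where
  "A_set q n k = {a. length a = n \<and> set a \<subseteq> {0..<q} \<and> is_RLL k a}"

definition a_count :: "nat \<Rightarrow> nat \<Rightarrow> nat \<Rightarrow> nat" where
  "a_count q n k = card (A_set q n k)"

end

theory Submission
  imports Defs "HOL-Library.Sublist"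
begin

text \<open>A word avoids the run 0^k iff its tail does and it does not itself begin with 0^k.
  The admissible words of length n + 1 beginning with 0^k are exactly 0^k y zs with y \<noteq> 0 and zs
  admissible of length n - k, whence a(n + 1) = q a(n) - (q - 1) a(n - k) for n \<ge> k.
  By strong induction the ratio a(n + 1) / a(n) is at least q (1 - q^-k), and for n \<ge> k at most
  q (1 - (q - 1) q^(-k-1)). Bernoulli's inequality and 1 - x \<le> e^-x turn these into the stated
  bounds; the lower bound even holds without its exponential factor, which is at most 1.\<close>

lemma is_RLL_iff_not_sublist: "is_RLL k a \<longleftrightarrow> \<not> sublist (replicate k 0) a"
proof
  assume rll: "is_RLL k a"
  show "\<not> sublist (replicate k 0) a"
  proof
    assume "sublist (replicate k 0) a"
    then obtain us vs where a: "a = us @ replicate k 0 @ vs" by (auto simp: sublist_def)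
    moreover have "length us + k \<le> length a" using a by simp
    ultimately obtain j where "j \<in> {length us..<length us + k}" "a ! j \<noteq> 0"
      using rll unfolding is_RLL_def by fastforce
    with a show False by (auto simp: nth_append split: if_splits)
  qed
next
  assume no_run: "\<not> sublist (replicate k 0) a"
  show "is_RLL k a"
  proof (rule ccontr)
    assume "\<not> is_RLL k a"
    then obtain i where i: "i + k \<le> length a" and zero: "\<forall>j\<in>{i..<i+k}. a ! j = 0"
      unfolding is_RLL_def by auto
    have "take k (drop i a) = replicate k 0"
      by (rule nth_equalityI) (use i zero in auto)
    moreover have "a = take i a @ take k (drop i a) @ drop k (drop i a)"
      by (simp only: append_take_drop_id)
    ultimately show False using no_run by (metis sublist_appendI)
  qed
qed

lemma prefix_replicate_append_Cons:
  "y \<noteq> c \<Longrightarrow> prefix (replicate k c) (replicate m c @ y # zs) \<longleftrightarrow> k \<le> m"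
proof (induction k arbitrary: m)
  case (Suc k)
  then show ?case by (cases m) auto
qed simp

lemma sublist_replicate_append_Cons:
  assumes "y \<noteq> c"
  shows "sublist (replicate k c) (replicate m c @ y # zs) \<longleftrightarrow> k \<le> m \<or> sublist (replicate k c) zs"
proof (induction m)
  case 0
  then show ?case
    using assms prefix_replicate_append_Cons[of y c k 0 zs] by (simp add: sublist_Cons_right)
next
  case (Suc m)
  then show ?case
    using assms prefix_replicate_append_Cons[of y c k "Suc m" zs]
    by (auto simp: sublist_Cons_right)
qed

lemma sublist_same_length_eq: "sublist xs ys \<Longrightarrow> length xs = length ys \<Longrightarrow> xs = ys"
  by (auto simp: sublist_def)

lemma A_set_iff:
  "a \<in> A_set q n k \<longleftrightarrow> length a = n \<and> set a \<subseteq> {0..<q} \<and> \<not> sublist (replicate k 0) a"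
  by (simp add: A_set_def is_RLL_iff_not_sublist)

lemma A_set_subset_lists: "A_set q n k \<subseteq> {xs. set xs \<subseteq> {0..<q} \<and> length xs = n}"
  by (auto simp: A_set_def)

lemma finite_A_set: "finite (A_set q n k)"
  using A_set_subset_lists by (rule finite_subset) (simp add: finite_lists_length_eq)

lemma a_count_le_power: "a_count q n k \<le> q ^ n"
  unfolding a_count_def
  using card_mono[OF _ A_set_subset_lists] by (simp add: card_lists_length_eq finite_lists_length_eq)

lemma a_count_short:
  assumes "n < k"
  shows "a_count q n k = q ^ n"
proof -
  have "A_set q n k = {xs. set xs \<subseteq> {0..<q} \<and> length xs = n}"
    using assms by (auto simp: A_set_def is_RLL_def)
  then show ?thesis by (simp add: a_count_def card_lists_length_eq)
qed

lemma a_count_self: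
  assumes "1 \<le> q"
  shows "a_count q k k = q ^ k - 1"
proof -
  let ?L = "{xs. set xs \<subseteq> {0..<q} \<and> length xs = k}"
  have "sublist (replicate k 0) xs \<longleftrightarrow> xs = replicate k 0" if "length xs = k" for xs :: "nat list"
    using that sublist_same_length_eq[of "replicate k 0" xs] by auto
  then have "A_set q k k = ?L - {replicate k 0}"
    by (auto simp: A_set_iff subset_iff)
  moreover have "replicate k 0 \<in> ?L" using assms by auto
  ultimately show ?thesis
    by (simp add: a_count_def card_lists_length_eq finite_lists_length_eq)
qed

lemma A_set_Suc:
  "A_set q (Suc n) k = {a \<in> case_prod Cons ` ({0..<q} \<times> A_set q n k). \<not> prefix (replicate k 0) a}"
  by (force simp: A_set_iff sublist_Cons_right length_Suc_conv)

lemma card_Cons_image_A_set: "card (case_prod Cons ` ({0..<q} \<times> A_set q n k)) = q * a_count q n k"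
  by (subst card_image) (auto simp: inj_on_def a_count_def card_cartesian_product)

lemma a_count_Suc_le: "a_count q (Suc n) k \<le> q * a_count q n k"
  unfolding a_count_def A_set_Suc card_Cons_image_A_set[symmetric, unfolded a_count_def]
  by (rule card_mono) (auto simp: finite_A_set)

lemma replicate_zero_append_Cons_in_A_set:
  assumes "1 \<le> k" "k \<le> n"
  shows "replicate (k - 1) 0 @ y # zs \<in> A_set q n k \<longleftrightarrow> y \<in> {1..<q} \<and> zs \<in> A_set q (n - k) k"
proof (cases "y = 0")
  case True
  then have run: "replicate (k - 1) 0 @ y # zs = replicate k 0 @ zs"
    using assms(1) by (cases k) (simp_all add: replicate_app_Cons_same)
  show ?thesis unfolding run using True by (simp add: A_set_iff)
next
  case False
  then show ?thesis
    using assms sublist_replicate_append_Cons[of y 0 k "k - 1" zs] by (auto simp: A_set_iff)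
qed

lemma Cons_image_A_set_zero_run:
  assumes "1 \<le> k" "k \<le> n"
  shows "{a \<in> case_prod Cons ` ({0..<q} \<times> A_set q n k). prefix (replicate k 0) a}
       = (\<lambda>(y, zs). replicate k 0 @ y # zs) ` ({1..<q} \<times> A_set q (n - k) k)"
    (is "?Bad = ?Ext")
proof
  have run: "replicate k (0::nat) = 0 # replicate (k - 1) 0"
    using assms(1) by (cases k) auto
  show "?Bad \<subseteq> ?Ext"
  proof
    fix a assume bad: "a \<in> ?Bad"
    then obtain x xs where xs: "xs \<in> A_set q n k" and a: "a = x # xs"
      by auto
    from bad obtain vs where a_run: "a = replicate k 0 @ vs"
      by (auto simp: prefix_def)
    with a run have xs_eq: "xs = replicate (k - 1) 0 @ vs" by simp
    with xs assms obtain y zs where vs: "vs = y # zs"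
      by (cases vs) (auto simp: A_set_iff)
    with xs xs_eq have "y \<in> {1..<q}" "zs \<in> A_set q (n - k) k"
      using replicate_zero_append_Cons_in_A_set[OF assms] by simp_all
    moreover have "a = (\<lambda>(y, zs). replicate k 0 @ y # zs) (y, zs)"
      using a_run vs by simp
    ultimately show "a \<in> ?Ext" by (intro image_eqI[of a _ "(y, zs)"]) auto
  qed
  show "?Ext \<subseteq> ?Bad"
  proof
    fix a assume "a \<in> ?Ext"
    then obtain y zs where y: "y \<in> {1..<q}" and zs: "zs \<in> A_set q (n - k) k"
      and a: "a = replicate k 0 @ y # zs" by auto
    have "a = case_prod Cons (0, replicate (k - 1) 0 @ y # zs)" using a run by simp
    then have "a \<in> case_prod Cons ` ({0..<q} \<times> A_set q n k)"
      using y zs replicate_zero_append_Cons_in_A_set[OF assms]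
      by (auto intro!: image_eqI[where x = "(0, replicate (k - 1) 0 @ y # zs)"])
    moreover have "prefix (replicate k 0) a" using a by simp
    ultimately show "a \<in> ?Bad" by simp
  qed
qed

lemma a_count_Suc:
  assumes "1 \<le> k" "k \<le> n"
  shows "a_count q (Suc n) k + (q - 1) * a_count q (n - k) k = q * a_count q n k"
proof -
  let ?C = "case_prod Cons ` ({0..<q} \<times> A_set q n k)"
  let ?z = "replicate k (0::nat)"
  have "finite ?C" by (simp add: finite_A_set)
  have "card ?C = card ({a \<in> ?C. \<not> prefix ?z a} \<union> {a \<in> ?C. prefix ?z a})"
    by (rule arg_cong[where f = card]) blast
  also have "\<dots> = card {a \<in> ?C. \<not> prefix ?z a} + card {a \<in> ?C. prefix ?z a}"
    by (rule card_Un_disjoint) (use \<open>finite ?C\<close> in auto)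
  also have "card {a \<in> ?C. prefix ?z a} = (q - 1) * a_count q (n - k) k"
    unfolding Cons_image_A_set_zero_run[OF assms]
    by (subst card_image) (auto simp: inj_on_def a_count_def card_cartesian_product)
  finally show ?thesis
    by (simp add: A_set_Suc a_count_def card_Cons_image_A_set[unfolded a_count_def])
qed

lemma a_count_Suc_real:
  assumes "1 \<le> q" "1 \<le> k" "k \<le> n"
  shows "real (a_count q (Suc n) k) = real q * a_count q n k - (real q - 1) * a_count q (n - k) k"
  using arg_cong[OF a_count_Suc[OF assms(2,3), of q], of real] assms(1) by simp

lemma iterate_step_ge:
  fixes f :: "nat \<Rightarrow> real"
  assumes "\<And>m. i \<le> m \<Longrightarrow> m < i + d \<Longrightarrow> r * f m \<le> f (Suc m)" "0 \<le> r"
  shows "r ^ d * f i \<le> f (i + d)"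
  using assms(1)
proof (induction d)
  case (Suc d)
  then have "r * (r ^ d * f i) \<le> r * f (i + d)" using assms(2) by (simp add: mult_left_mono)
  also have "\<dots> \<le> f (Suc (i + d))" using Suc.prems by simp
  finally show ?case by (simp add: mult.assoc)
qed simp

lemma iterate_step_le:
  fixes f :: "nat \<Rightarrow> real"
  assumes "\<And>m. i \<le> m \<Longrightarrow> m < i + d \<Longrightarrow> f (Suc m) \<le> r * f m" "0 \<le> r"
  shows "f (i + d) \<le> r ^ d * f i"
  using assms(1)
proof (induction d)
  case (Suc d)
  then have "f (Suc (i + d)) \<le> r * f (i + d)" by simp
  also have "\<dots> \<le> r * (r ^ d * f i)" using Suc assms(2) by (simp add: mult_left_mono)
  finally show ?case by (simp add: mult.assoc)
qed simp

lemma mult_one_minus_inverse_pow_ge: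
  assumes "2 \<le> q" "1 \<le> k"
  shows "(real q - 1) * real q ^ (k - 1) \<le> (real q * (1 - 1 / real q ^ k)) ^ k"
proof -
  have qk: "real q ^ k = real q * real q ^ (k - 1)"
    using assms(2) by (cases k) simp_all
  have "k \<le> 2 ^ (k - 1)" using less_exp[of "k - 1"] assms(2) by linarith
  also have "(2::nat) ^ (k - 1) \<le> q ^ (k - 1)" using assms(1) by (simp add: power_mono)
  finally have k_le: "real k \<le> real q ^ (k - 1)" by (metis of_nat_le_iff of_nat_power)
  have "(real q - 1) * real q ^ (k - 1) \<le> real q ^ k * (1 + real k * (- 1 / real q ^ k))"
    using k_le qk assms(1) by (simp add: field_simps)
  also have "\<dots> \<le> real q ^ k * (1 + (- 1 / real q ^ k)) ^ k"
    using assms(1) by (intro mult_left_mono Bernoulli_inequality) (auto simp: field_simps)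
  finally show ?thesis by (simp add: power_mult_distrib)
qed

lemma a_count_Suc_ge:
  assumes "2 \<le> q" "1 \<le> k"
  shows "real q * (1 - 1 / real q ^ k) * a_count q n k \<le> a_count q (Suc n) k"
proof (induction n rule: less_induct)
  case (less n)
  define r where "r = real q * (1 - 1 / real q ^ k)"
  have q_pow: "1 \<le> real q ^ (k - 1)" "real q ^ k = real q * real q ^ (k - 1)"
    using assms by (cases k; simp)+
  have r_eq: "r = real q - 1 / real q ^ (k - 1)"
    using q_pow assms(1) by (simp add: r_def field_simps)
  have "1 / real q ^ (k - 1) \<le> 1" using q_pow(1) by (simp add: divide_le_eq)
  moreover have "0 < 1 / real q ^ (k - 1)" "2 \<le> real q" using assms(1) by simp_all
  ultimately have r_bounds: "0 \<le> r" "r \<le> real q"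
    unfolding r_eq by linarith+
  consider "Suc n < k" | "Suc n = k" | "k \<le> n" by linarith
  then show ?case
  proof cases
    case 1
    then show ?thesis
      using r_bounds by (simp add: a_count_short r_def[symmetric] mult_right_mono)
  next
    case 2
    then have "real (a_count q (Suc n) k) = real q ^ k - 1" "real (a_count q n k) = real q ^ (k - 1)"
      using assms by (simp_all add: a_count_self a_count_short)
    then show ?thesis
      using q_pow by (simp add: r_def[symmetric] r_eq field_simps)
  next
    case 3
    \<comment> \<open>k more steps of the induction hypothesis bound the subtracted term of the recurrence\<close>
    have "(real q - 1) * real q ^ (k - 1) * a_count q (n - k) k \<le> r ^ k * a_count q (n - k) k"
      unfolding r_def using mult_one_minus_inverse_pow_ge[OF assms] by (simp add: mult_right_mono)
    also have "\<dots> \<le> a_count q (n - k + k) k"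
      using r_bounds(1) 3 by (intro iterate_step_ge) (auto simp: r_def intro!: less.IH)
    finally have "(real q - 1) * a_count q (n - k) k \<le> a_count q n k / real q ^ (k - 1)"
      using 3 assms(1) by (simp add: pos_le_divide_eq mult_ac)
    moreover have "r * a_count q n k = real q * a_count q n k - a_count q n k / real q ^ (k - 1)"
      unfolding r_eq by (simp add: algebra_simps)
    ultimately show ?thesis
      unfolding r_def[symmetric] using a_count_Suc_real[of q k n] 3 assms by linarith
  qed
qed

lemma a_count_ge:
  assumes "2 \<le> q" "1 \<le> k"
  shows "real q ^ n * (1 - 1 / real q ^ k) ^ n \<le> a_count q n k"
proof -
  have "0 \<le> real q * (1 - 1 / real q ^ k)"
    using assms(1) by (simp add: field_simps)
  then have "(real q * (1 - 1 / real q ^ k)) ^ n * a_count q 0 k \<le> a_count q (0 + n) k"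
    using a_count_Suc_ge[OF assms] by (intro iterate_step_ge) auto
  moreover have "a_count q 0 k = 1" using assms by (simp add: a_count_short)
  ultimately show ?thesis by (simp add: power_mult_distrib)
qed

lemma a_count_Suc_le_ratio:
  assumes "1 \<le> q" "1 \<le> k" "k \<le> n"
  shows "a_count q (Suc n) k \<le> real q * (1 - (real q - 1) / real q ^ (k + 1)) * a_count q n k"
proof -
  have "real (a_count q (n - k + k) k) \<le> real q ^ k * a_count q (n - k) k"
    using a_count_Suc_le[of q _ k] by (intro iterate_step_le) (auto simp flip: of_nat_mult)
  then have "(real q - 1) * (a_count q n k / real q ^ k) \<le> (real q - 1) * a_count q (n - k) k"
    using assms by (intro mult_left_mono) (simp_all add: pos_divide_le_eq mult_ac)
  moreover have "real q * (1 - (real q - 1) / real q ^ (k + 1)) * a_count q n k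
      = real q * a_count q n k - (real q - 1) * (a_count q n k / real q ^ k)"
    using assms(1) by (simp add: field_simps)
  ultimately show ?thesis
    using a_count_Suc_real[OF assms] by linarith
qed

lemma diff_one_div_power_le_one:
  assumes "1 \<le> q"
  shows "(real q - 1) / real q ^ (k + 1) \<le> 1"
proof -
  have "real q \<le> real q ^ (k + 1)"
    using assms by (intro self_le_power) simp_all
  moreover have "0 < real q ^ (k + 1)" using assms by simp
  ultimately show ?thesis by simp
qed

lemma a_count_le:
  assumes "1 \<le> q" "1 \<le> k" "k \<le> n"
  shows "a_count q n k \<le> real q ^ n * (1 - (real q - 1) / real q ^ (k + 1)) ^ (n - k)"
proof -
  define s where "s = real q * (1 - (real q - 1) / real q ^ (k + 1))"
  have s_nonneg: "0 \<le> s"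
    using diff_one_div_power_le_one[OF assms(1)] by (simp add: s_def)
  have "real (a_count q (k + (n - k)) k) \<le> s ^ (n - k) * a_count q k k"
    using a_count_Suc_le_ratio[OF assms(1,2)] s_nonneg
    by (intro iterate_step_le) (simp_all add: s_def)
  also have "\<dots> \<le> s ^ (n - k) * real q ^ k"
    using s_nonneg a_count_le_power[of q k k] by (intro mult_left_mono) (simp_all flip: of_nat_power)
  also have "\<dots> = real q ^ n * (1 - (real q - 1) / real q ^ (k + 1)) ^ (n - k)"
    using assms(3) by (simp add: s_def power_mult_distrib mult_ac flip: power_add)
  finally show ?thesis using assms(3) by simp
qed

lemma power_one_minus_mult_le:
  fixes x :: real
  assumes "0 \<le> x" "real m * x \<le> 1" "x \<le> 1" "n \<le> M * m"
  shows "(1 - real m * x) ^ M \<le> (1 - x) ^ n"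
proof -
  have "(1 - real m * x) ^ M \<le> ((1 - x) ^ m) ^ M"
    using assms(1-3) Bernoulli_inequality[of "- x" m] by (intro power_mono) simp_all
  also have "\<dots> = (1 - x) ^ (M * m)" by (simp add: power_mult[symmetric] mult.commute)
  also have "\<dots> \<le> (1 - x) ^ n"
    using assms by (intro power_decreasing) simp_all
  finally show ?thesis .
qed

lemma power_one_minus_le_exp:
  fixes x :: real
  assumes "x \<le> 1"
  shows "(1 - x) ^ n \<le> exp (- (real n * x))"
proof -
  have "(1 - x) ^ n \<le> exp (- x) ^ n"
    using assms exp_ge_add_one_self[of "- x"] by (intro power_mono) simp_all
  then show ?thesis by (simp add: exp_of_nat_mult[symmetric])
qed

lemma power_mult_one_minus_le_powr:
  assumes "2 \<le> q" "k \<le> n"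
  shows "real q ^ n * (1 - (real q - 1) / real q ^ (k + 1)) ^ (n - k)
    \<le> real q powr (real n - log (real q) (exp 1) * (real q - 1)^2 / (2 * real q ^ 2)
                           * (real n - 2 * real k) / real q ^ k)"
proof -
  define t where "t = (real q - 1) / real q ^ (k + 1)"
  define y where "y = log (real q) (exp 1) * (real q - 1)^2 / (2 * real q ^ 2)
                      * (real n - 2 * real k) / real q ^ k"
  have q: "2 \<le> real q" using assms(1) by simp
  have "t \<le> 1"
    using assms(1) diff_one_div_power_le_one[of q k] by (simp add: t_def)
  have "(real q - 1) * (real n - 2 * real k) \<le> 2 * real q * real (n - k)"
  proof -
    have "(real q - 1) * (real n - 2 * real k) \<le> (real q - 1) * real (n - k)"
      using q assms(2) by (intro mult_left_mono) simp_all
    also have "\<dots> \<le> 2 * real q * real (n - k)"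
      using q by (intro mult_right_mono) simp_all
    finally show ?thesis .
  qed
  then have "(real q - 1) * ((real q - 1) * (real n - 2 * real k))
      \<le> (real q - 1) * (2 * real q * real (n - k))"
    using q by (intro mult_left_mono) simp_all
  then have "(real q - 1) * ((real q - 1) * (real n - 2 * real k)) / (2 * real q ^ (k + 2))
      \<le> (real q - 1) * (2 * real q * real (n - k)) / (2 * real q ^ (k + 2))"
    by (intro divide_right_mono) simp_all
  moreover have "y * ln (real q)
      = (real q - 1) * ((real q - 1) * (real n - 2 * real k)) / (2 * real q ^ (k + 2))"
    using q by (simp add: y_def log_def power2_eq_square power_add field_simps)
  moreover have "real (n - k) * t = (real q - 1) * (2 * real q * real (n - k)) / (2 * real q ^ (k + 2))"
    using q by (simp add: t_def power_add field_simps)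
  ultimately have "y * ln (real q) \<le> real (n - k) * t" by simp
  have "real q ^ n * (1 - t) ^ (n - k) \<le> real q ^ n * exp (- (real (n - k) * t))"
    using \<open>t \<le> 1\<close> by (intro mult_left_mono power_one_minus_le_exp) simp_all
  also have "\<dots> \<le> real q ^ n * exp (- (y * ln (real q)))"
    using \<open>y * ln (real q) \<le> real (n - k) * t\<close> by (intro mult_left_mono) simp_all
  also have "\<dots> = real q powr (real n - y)"
    using q by (simp add: powr_diff powr_realpow exp_minus divide_inverse powr_def[of _ y])
  finally show ?thesis unfolding t_def y_def .
qed

lemma ratio_powr_floor_le_power:
  assumes "2 \<le> q" "1 \<le> k" "0 < n"
  shows "((real q - 1) / real q)
           powr ((real (nat \<lfloor>real n / real q ^ (k - 1)\<rfloor>) + 1) / (real n / real q ^ (k - 1))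
                 * real n / real q ^ (k - 1))
         \<le> (1 - 1 / real q ^ k) ^ n"
proof -
  define Q where "Q = real q ^ (k - 1)"
  define M where "M = nat \<lfloor>real n / Q\<rfloor> + 1"
  have q: "2 \<le> real q" and Q: "0 < Q"
    using assms(1) by (simp_all add: Q_def)
  have "real n < real M * Q"
    using Q by (simp add: M_def pos_divide_less_eq[symmetric]) linarith
  then have "n \<le> M * q ^ (k - 1)"
    unfolding Q_def by (metis less_imp_le of_nat_le_iff of_nat_mult of_nat_power)
  moreover have "real q ^ (k - 1) * (1 / real q ^ k) = 1 / real q"
    using assms(2) q by (cases k) simp_all
  ultimately have "((real q - 1) / real q) ^ M \<le> (1 - 1 / real q ^ k) ^ n"
    using q power_one_minus_mult_le[of "1 / real q ^ k" "q ^ (k - 1)" n M]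
    by (simp add: diff_divide_distrib)
  moreover have "(real (nat \<lfloor>real n / Q\<rfloor>) + 1) / (real n / Q) * real n / Q = real M"
    using Q assms(3) by (simp add: M_def field_simps)
  ultimately show ?thesis
    unfolding Q_def[symmetric] using q by (simp add: powr_realpow)
qed

theorem lemma1:
  fixes q n k :: nat
  assumes "q \<ge> 2" and "5 \<le> k" and "k \<le> n"
  defines "c1 \<equiv> (real q - 1) * real q powr (real (nat \<lceil>real k / 2\<rceil>) - real k / 2) / (2 * real q)"
      and "c2 \<equiv> (real (nat \<lfloor>real n / real q ^ (k - 1)\<rfloor>) + 1) / (real n / real q ^ (k - 1))"
      and "c3 \<equiv> log (real q) (exp 1) * (real q - 1)^2 / (2 * real q ^ 2)"
  shows "real q ^ n * ((real q - 1) / real q) powr (c2 * real n / real q ^ (k - 1))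
           * exp (- (c2 / c1) * real n / real q powr (1.5 * real k - 1))
         \<le> real (a_count q n k)
       \<and> real (a_count q n k) \<le> real q powr (real n - c3 * (real n - 2 * real k) / real q ^ k)"
proof
  have "exp (- (c2 / c1) * real n / real q powr (1.5 * real k - 1)) \<le> 1"
    using assms(1) by (simp add: c1_def c2_def)
  then have "real q ^ n * ((real q - 1) / real q) powr (c2 * real n / real q ^ (k - 1))
           * exp (- (c2 / c1) * real n / real q powr (1.5 * real k - 1))
      \<le> real q ^ n * ((real q - 1) / real q) powr (c2 * real n / real q ^ (k - 1))"
    by (rule mult_left_le) simp
  also have "\<dots> \<le> real q ^ n * (1 - 1 / real q ^ k) ^ n"
    using ratio_powr_floor_le_power[of q k n] assms(1-3)
    by (intro mult_left_mono) (simp_all add: c2_def)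
  also have "\<dots> \<le> real (a_count q n k)"
    using assms(1,2) by (intro a_count_ge) simp_all
  finally show "real q ^ n * ((real q - 1) / real q) powr (c2 * real n / real q ^ (k - 1))
           * exp (- (c2 / c1) * real n / real q powr (1.5 * real k - 1)) \<le> real (a_count q n k)" .
  show "real (a_count q n k) \<le> real q powr (real n - c3 * (real n - 2 * real k) / real q ^ k)"
    using a_count_le[of q k n] power_mult_one_minus_le_powr[of q k n] assms(1-3)
    unfolding c3_def by linarith
qed

end
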